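(* Let $\gamma_1,\gamma_2>0$, let $M\ge1$ be an integer, and let $Z\sim\mathrm{Gamma}(M,1)$ and $Y\sim\mathrm{Gamma}(1,1)$ be independent. Let $X=\dfrac{\gamma_1 Z}{1+\gamma_2 Y}$. Then $$\mathbb{E}[\log_2(1+X)]=\log_2(e)\sum_{i=0}^{M-1}\sum_{l=0}^{i}\frac{\gamma_1^{\,l+1-i}}{\gamma_2\,(i-l)!}\,I_1\!\left(\frac{1}{\gamma_1},\frac{\gamma_1}{\gamma_2},i,l+1\right),$$ where $I_1(a,b,m,n)=\displaystyle\int_0^\infty\frac{x^m e^{-ax}}{(x+b)^n(x+1)}\,dx$.
   Context: $\mathrm{Gamma}(M,1)$ denotes the distribution of a sum of $M$ i.i.d. unit-mean exponential random variables (the paper writes $\chi^2_{2M}$). This quantity is denoted $R_I^{(2)}(\gamma_1,\gamma_2,M)$. *)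

theory Defs
  imports "HOL-Probability.Probability"
begin

definition I1 :: "real \<Rightarrow> real \<Rightarrow> nat \<Rightarrow> nat \<Rightarrow> real" where
  "I1 a b m n = (LBINT x:{0<..}. x ^ m * exp (- a * x) / ((x + b) ^ n * (x + 1)))"

end

theory Submission
  imports Defs
begin

(* The expectation of ln(1 + X), X = \<gamma>1 Z / (1 + \<gamma>2 Y), is computed as an iterated
   nonnegative integral over the product of the two densities, in three steps:
   1. Layer cake: ln(1 + z/s) is the integral of 1/(1+t) over [0, z/s], so for fixed Y = y
      (with s = (1 + \<gamma>2 y)/\<gamma>1) Fubini turns the Z-integral into the integral over t >= 0 of
      P(Z >= s t)/(1+t); the Erlang tail P(Z >= u) is a finite Poisson sum erlang_tail.
   2. Averaging over Y: with u = (1 + \<gamma>2 y) t / \<gamma>1 affine in y, every Poisson term expands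
      binomially into moments of an exponential law, giving a finite closed form.
   3. After swapping the order of integration once more, each resulting term integrated
      over t is exactly one of the integrals I1(1/\<gamma>1, \<gamma>1/\<gamma>2, i, l+1). *)

section \<open>The Erlang tail probability\<close>

text \<open>For integer shape k+1 and unit rate, P(Z \<ge> u) is the Poisson sum below.\<close>
definition erlang_tail :: "nat \<Rightarrow> real \<Rightarrow> real" where
  "erlang_tail k u = (\<Sum>n\<le>k. u ^ n * exp (- u) / fact n)"

lemma erlang_tail_measurable[measurable]: "erlang_tail k \<in> borel_measurable borel"
  unfolding erlang_tail_def by measurable

lemma erlang_tail_nonneg: "0 \<le> u \<Longrightarrow> 0 \<le> erlang_tail k u"
  unfolding erlang_tail_def by (intro sum_nonneg) auto

text \<open>The negated tail is an antiderivative of the Erlang density (the sum telescopes).\<close>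
lemma DERIV_erlang_tail: "DERIV (\<lambda>x. - erlang_tail k x) x :> x ^ k * exp (- x) / fact k"
proof (induction k)
  case 0
  show ?case unfolding erlang_tail_def by (auto intro!: derivative_eq_intros)
next
  case (Suc k)
  have "DERIV (\<lambda>x. - erlang_tail k x - x ^ Suc k * exp (- x) / fact (Suc k)) x :>
      x ^ k * exp (- x) / fact k - (real (Suc k) - x) * x ^ k * exp (- x) / fact (Suc k)"
    by (intro DERIV_diff Suc)
       (auto intro!: derivative_eq_intros simp del: fact_Suc power_Suc
             simp add: field_simps power_Suc[symmetric])
  also have "(\<lambda>x. - erlang_tail k x - x ^ Suc k * exp (- x) / fact (Suc k)) = (\<lambda>x. - erlang_tail (Suc k) x)"
    by (simp add: erlang_tail_def)
  also have "x ^ k * exp (- x) / fact k - (real (Suc k) - x) * x ^ k * exp (- x) / fact (Suc k)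
      = x ^ Suc k * exp (- x) / fact (Suc k)"
    by (auto simp: field_simps simp del: fact_Suc) (simp_all add: of_nat_Suc field_simps)
  finally show ?case .
qed

lemma erlang_tail_tendsto_0: "((\<lambda>x. - erlang_tail k x) \<longlongrightarrow> 0) at_top"
proof -
  have "((\<lambda>x::real. - (\<Sum>n\<le>k. x ^ n / exp x / fact n)) \<longlongrightarrow> - (\<Sum>n\<le>k. 0 / fact n)) at_top"
    by (intro tendsto_intros tendsto_power_div_exp_0) simp
  then show ?thesis by (simp add: erlang_tail_def exp_minus field_simps)
qed

lemma nn_integral_erlang_tail:
  assumes "0 \<le> a"
  shows "(\<integral>\<^sup>+x. ennreal (erlang_density k 1 x) * indicator {a..} x \<partial>lborel) = ennreal (erlang_tail k a)"
proof -
  have "(\<integral>\<^sup>+x. ennreal (erlang_density k 1 x) * indicator {a..} x \<partial>lborel) = 0 - (- erlang_tail k a)"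
    by (rule nn_integral_FTC_atLeast[where F = "\<lambda>x. - erlang_tail k x"])
       (use assms DERIV_erlang_tail erlang_tail_tendsto_0 in \<open>auto simp: erlang_density_def\<close>)
  then show ?thesis by simp
qed

section \<open>Layer-cake representation of the logarithmic moment\<close>

lemma ln_one_plus_nn_integral:
  assumes "0 \<le> c"
  shows "ennreal (ln (1 + c)) = (\<integral>\<^sup>+t. ennreal (1 / (1 + t)) * indicator {0..c} t \<partial>lborel)"
proof -
  have "(\<integral>\<^sup>+t. ennreal (1 / (1 + t)) * indicator {0..c} t \<partial>lborel) = ln (1 + c) - ln (1 + 0)"
    by (rule nn_integral_FTC_Icc[where F = "\<lambda>t. ln (1 + t)"])
       (use assms in \<open>auto intro!: derivative_eq_intros\<close>)
  then show ?thesis by simp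
qed

lemma nn_integral_ln_layer_cake:
  fixes f :: "real \<Rightarrow> real" and s :: real
  assumes [measurable]: "f \<in> borel_measurable borel"
    and s: "0 < s" and f_neg: "\<And>z. z < 0 \<Longrightarrow> f z = 0"
  shows "(\<integral>\<^sup>+z. ennreal (f z) * ennreal (ln (1 + z / s)) \<partial>lborel)
       = (\<integral>\<^sup>+t. ennreal (1 / (1 + t)) * indicator {0..} t *
             (\<integral>\<^sup>+z. ennreal (f z) * indicator {s * t..} z \<partial>lborel) \<partial>lborel)"
proof -
  define F where "F z t = ennreal (f z) * (ennreal (1 / (1 + t)) * indicator {0..} t * indicator {s * t..} z)"
    for z t :: real
  have F_measurable: "(\<lambda>(z, t). F z t) \<in> borel_measurable (lborel \<Otimes>\<^sub>M lborel)"
  proof -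
    have [measurable]: "Measurable.pred (borel \<Otimes>\<^sub>M borel) (\<lambda>x::real \<times> real. fst x \<in> {s * snd x..})"
      by (simp add: atLeast_iff) measurable
    show ?thesis unfolding F_def by measurable
  qed
  have "ennreal (f z) * ennreal (ln (1 + z / s)) = (\<integral>\<^sup>+t. F z t \<partial>lborel)" for z
  proof (cases "z < 0")
    case True
    then show ?thesis by (simp add: F_def f_neg)
  next
    case False
    have "indicator {0..z / s} t = (indicator {0..} t * indicator {s * t..} z :: ennreal)" for t
      using s by (auto split: split_indicator simp: field_simps)
    moreover have "ennreal (ln (1 + z / s)) = (\<integral>\<^sup>+t. ennreal (1 / (1 + t)) * indicator {0..z / s} t \<partial>lborel)"
      using False s by (intro ln_one_plus_nn_integral) auto
    moreover have "(\<lambda>t. ennreal (1 / (1 + t)) * indicator {0..z / s} t) \<in> borel_measurable lborel"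
      by measurable
    ultimately show ?thesis
      by (simp add: F_def nn_integral_cmult[symmetric] mult.assoc)
  qed
  then have "(\<integral>\<^sup>+z. ennreal (f z) * ennreal (ln (1 + z / s)) \<partial>lborel)
      = (\<integral>\<^sup>+z. \<integral>\<^sup>+t. F z t \<partial>lborel \<partial>lborel)"
    by simp
  also have "\<dots> = (\<integral>\<^sup>+t. \<integral>\<^sup>+z. F z t \<partial>lborel \<partial>lborel)"
    using F_measurable by (rule lborel_pair.Fubini'[symmetric])
  also have "\<dots> = (\<integral>\<^sup>+t. ennreal (1 / (1 + t)) * indicator {0..} t *
                      (\<integral>\<^sup>+z. ennreal (f z) * indicator {s * t..} z \<partial>lborel) \<partial>lborel)"
    by (intro nn_integral_cong, subst nn_integral_cmult[symmetric]) (auto simp: F_def ac_simps)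
  finally show ?thesis .
qed

lemma nn_integral_erlang_ln:
  assumes s: "0 < s"
  shows "(\<integral>\<^sup>+z. ennreal (erlang_density k 1 z) * ennreal (ln (1 + z / s)) \<partial>lborel)
       = (\<integral>\<^sup>+t. ennreal (erlang_tail k (s * t) / (1 + t)) * indicator {0..} t \<partial>lborel)"
proof -
  have "(\<integral>\<^sup>+z. ennreal (erlang_density k 1 z) * ennreal (ln (1 + z / s)) \<partial>lborel)
      = (\<integral>\<^sup>+t. ennreal (1 / (1 + t)) * indicator {0..} t *
             (\<integral>\<^sup>+z. ennreal (erlang_density k 1 z) * indicator {s * t..} z \<partial>lborel) \<partial>lborel)"
    using s by (intro nn_integral_ln_layer_cake) (auto simp: erlang_density_def)
  also have "\<dots> = (\<integral>\<^sup>+t. ennreal (erlang_tail k (s * t) / (1 + t)) * indicator {0..} t \<partial>lborel)"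
  proof (intro nn_integral_cong)
    fix t :: real
    show "ennreal (1 / (1 + t)) * indicator {0..} t *
        (\<integral>\<^sup>+z. ennreal (erlang_density k 1 z) * indicator {s * t..} z \<partial>lborel)
      = ennreal (erlang_tail k (s * t) / (1 + t)) * indicator {0..} t"
      using s by (cases "0 \<le> t")
        (auto simp: nn_integral_erlang_tail ennreal_mult'[symmetric] erlang_tail_nonneg)
  qed
  finally show ?thesis .
qed

section \<open>Averaging the Erlang tail over an exponential variable\<close>

lemma exponential_erlang_tail_expansion:
  fixes \<alpha> \<beta> y :: real
  assumes "0 \<le> \<beta>"
  shows "exponential_density 1 y * erlang_tail k (\<beta> * y + \<alpha>)
       = (\<Sum>n\<le>k. \<Sum>j\<le>n. \<beta> ^ j * \<alpha> ^ (n - j) * exp (- \<alpha>) / (fact j * fact (n - j) * (1 + \<beta>))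
                        * (exponential_density (1 + \<beta>) y * y ^ j))"
proof (cases "y < 0")
  case True
  then show ?thesis by (simp add: exponential_density_def)
next
  case False
  have "1 + \<beta> \<noteq> 0" using assms by simp
  have exp_split: "exp (- y) * exp (- (\<beta> * y + \<alpha>)) = exp (- \<alpha>) * exp (- (y * (1 + \<beta>)))"
    by (simp add: mult_exp_exp algebra_simps)
  have "exp (- y) * ((\<beta> * y + \<alpha>) ^ n * exp (- (\<beta> * y + \<alpha>)) / fact n)
      = (\<Sum>j\<le>n. \<beta> ^ j * \<alpha> ^ (n - j) * exp (- \<alpha>) / (fact j * fact (n - j) * (1 + \<beta>))
                 * ((1 + \<beta>) * exp (- (y * (1 + \<beta>))) * y ^ j))" for n
  proof -
    have "exp (- y) * ((\<beta> * y + \<alpha>) ^ n * exp (- (\<beta> * y + \<alpha>)) / fact n)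
        = (\<Sum>j\<le>n. real (n choose j) / fact n * (\<beta> * y) ^ j * \<alpha> ^ (n - j) * (exp (- \<alpha>) * exp (- (y * (1 + \<beta>)))))"
      unfolding binomial_ring[of "\<beta> * y" \<alpha> n] exp_split[symmetric]
      by (simp add: sum_distrib_left sum_distrib_right sum_divide_distrib ac_simps)
    also have "\<dots> = (\<Sum>j\<le>n. \<beta> ^ j * \<alpha> ^ (n - j) * exp (- \<alpha>) / (fact j * fact (n - j) * (1 + \<beta>))
                 * ((1 + \<beta>) * exp (- (y * (1 + \<beta>))) * y ^ j))"
      using assms \<open>1 + \<beta> \<noteq> 0\<close> by (intro sum.cong refl) (simp add: binomial_fact power_mult_distrib)
    finally show ?thesis .
  qed
  then show ?thesis
    using False by (simp add: exponential_density_def erlang_tail_def sum_distrib_left)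
qed

lemma nn_integral_exponential_erlang_tail:
  fixes \<alpha> \<beta> :: real
  assumes "0 \<le> \<alpha>" "0 \<le> \<beta>"
  shows "(\<integral>\<^sup>+y. ennreal (exponential_density 1 y * erlang_tail k (\<beta> * y + \<alpha>)) \<partial>lborel)
       = ennreal (\<Sum>n\<le>k. \<Sum>j\<le>n. \<beta> ^ j * \<alpha> ^ (n - j) * exp (- \<alpha>) / (fact (n - j) * (1 + \<beta>) ^ (j + 1)))"
proof -
  define K where "K n j = \<beta> ^ j * \<alpha> ^ (n - j) * exp (- \<alpha>) / (fact j * fact (n - j) * (1 + \<beta>))"
    for n j :: nat
  have K_nonneg: "0 \<le> K n j" for n j
    using assms by (simp add: K_def)
  have moment_nonneg: "0 \<le> exponential_density (1 + \<beta>) y * y ^ j" for y :: real and j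
    using assms by (simp add: exponential_density_def)
  have "ennreal (exponential_density 1 y * erlang_tail k (\<beta> * y + \<alpha>))
      = (\<Sum>n\<le>k. \<Sum>j\<le>n. ennreal (K n j) * ennreal (exponential_density (1 + \<beta>) y * y ^ j))" for y
    unfolding exponential_erlang_tail_expansion[OF assms(2)] K_def[symmetric]
    using K_nonneg moment_nonneg by (simp add: ennreal_mult[symmetric] sum_nonneg)
  then have "(\<integral>\<^sup>+y. ennreal (exponential_density 1 y * erlang_tail k (\<beta> * y + \<alpha>)) \<partial>lborel)
      = (\<integral>\<^sup>+y. (\<Sum>n\<le>k. \<Sum>j\<le>n. ennreal (K n j) * ennreal (exponential_density (1 + \<beta>) y * y ^ j)) \<partial>lborel)"
    by simp
  also have "\<dots> = (\<Sum>n\<le>k. \<Sum>j\<le>n. ennreal (K n j) * ennreal (fact j / (1 + \<beta>) ^ j))"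
    using assms by (simp add: nn_integral_sum nn_integral_cmult nn_integral_erlang_ith_moment)
  also have "\<dots> = ennreal (\<Sum>n\<le>k. \<Sum>j\<le>n. K n j * (fact j / (1 + \<beta>) ^ j))"
  proof -
    have "0 \<le> K n j * (fact j / (1 + \<beta>) ^ j)" for n j
      using assms K_nonneg by simp
    then show ?thesis
      using assms K_nonneg by (simp add: ennreal_mult[symmetric] sum_nonneg del: times_divide_eq_right)
  qed
  also have "(\<Sum>n\<le>k. \<Sum>j\<le>n. K n j * (fact j / (1 + \<beta>) ^ j))
      = (\<Sum>n\<le>k. \<Sum>j\<le>n. \<beta> ^ j * \<alpha> ^ (n - j) * exp (- \<alpha>) / (fact (n - j) * (1 + \<beta>) ^ (j + 1)))"
    using \<open>0 \<le> \<beta>\<close> by (intro sum.cong refl) (simp add: K_def power_add)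
  finally show ?thesis .
qed

section \<open>The integrals I1\<close>

definition I1_integrand :: "real \<Rightarrow> real \<Rightarrow> nat \<Rightarrow> nat \<Rightarrow> real \<Rightarrow> real" where
  "I1_integrand a b m n x = x ^ m * exp (- a * x) / ((x + b) ^ n * (x + 1))"

lemma I1_eq_integral: "I1 a b m n = (\<integral>x. indicator {0<..} x * I1_integrand a b m n x \<partial>lborel)"
  by (simp add: I1_def I1_integrand_def set_lebesgue_integral_def)

lemma I1_integrand_measurable[measurable]: "I1_integrand a b m n \<in> borel_measurable borel"
  unfolding I1_integrand_def by measurable

lemma I1_integrand_nonneg: "0 \<le> x \<Longrightarrow> 0 < b \<Longrightarrow> 0 \<le> I1_integrand a b m n x"
  by (simp add: I1_integrand_def)

text \<open>For a, b > 0 the integrand is dominated by x^m e^{-a x} / b^n, an exponential moment.\<close>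
lemma I1_integrable:
  assumes a: "0 < a" and b: "0 < b"
  shows "integrable lborel (\<lambda>x. indicator {0<..} x * I1_integrand a b m n x)"
proof (rule Bochner_Integration.integrable_bound)
  have "(\<integral>\<^sup>+x. ennreal (erlang_density 0 a x * x ^ m) \<partial>lborel) < \<infinity>"
    using a by (simp add: nn_integral_erlang_ith_moment)
  then have "integrable lborel (\<lambda>x. erlang_density 0 a x * x ^ m)"
    using a by (intro integrableI_nonneg) (auto intro!: AE_I2 simp: erlang_density_def)
  then show "integrable lborel (\<lambda>x. erlang_density 0 a x * x ^ m / (a * b ^ n))"
    by (rule integrable_divide)
  show "(\<lambda>x. indicator {0<..} x * I1_integrand a b m n x) \<in> borel_measurable lborel"
    by measurable
  show "AE x in lborel. norm (indicator {0<..} x * I1_integrand a b m n x)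
                         \<le> norm (erlang_density 0 a x * x ^ m / (a * b ^ n))"
  proof (intro AE_I2)
    fix x :: real
    show "norm (indicator {0<..} x * I1_integrand a b m n x) \<le> norm (erlang_density 0 a x * x ^ m / (a * b ^ n))"
    proof (cases "0 < x")
      case False
      then show ?thesis by simp
    next
      case True
      have "b ^ n * 1 \<le> (x + b) ^ n * (x + 1)"
        using True b by (intro mult_mono power_mono) auto
      then have "I1_integrand a b m n x \<le> x ^ m * exp (- a * x) / b ^ n"
        using True b unfolding I1_integrand_def by (intro divide_left_mono mult_pos_pos) auto
      then show ?thesis
        using True a b I1_integrand_nonneg[of x b a m n]
        by (simp add: erlang_density_def mult.commute)
    qed
  qed
qed

lemma I1_nonneg: "0 < b \<Longrightarrow> 0 \<le> I1 a b m n"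
  unfolding I1_eq_integral
  by (intro integral_nonneg_AE AE_I2) (simp add: indicator_def I1_integrand_nonneg)

lemma nn_integral_I1:
  assumes "0 < a" "0 < b"
  shows "(\<integral>\<^sup>+t. ennreal (I1_integrand a b m n t) * indicator {0..} t \<partial>lborel) = ennreal (I1 a b m n)"
proof -
  have "(\<integral>\<^sup>+t. ennreal (I1_integrand a b m n t) * indicator {0..} t \<partial>lborel)
      = (\<integral>\<^sup>+t. ennreal (indicator {0<..} t * I1_integrand a b m n t) \<partial>lborel)"
    by (intro nn_integral_cong_AE, use AE_lborel_singleton[of 0] in eventually_elim)
       (auto simp: indicator_def)
  also have "\<dots> = ennreal (I1 a b m n)"
    unfolding I1_eq_integral
    using assms by (intro nn_integral_eq_integral I1_integrable AE_I2)
                   (auto simp: indicator_def I1_integrand_nonneg)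
  finally show ?thesis .
qed

lemma nn_integral_I1_sum:
  fixes c :: "nat \<Rightarrow> nat \<Rightarrow> real"
  assumes a: "0 < a" and b: "0 < b" and c: "\<And>n j. 0 \<le> c n j"
  shows "(\<integral>\<^sup>+t. ennreal (\<Sum>n\<le>k. \<Sum>j\<le>n. c n j * I1_integrand a b n (j + 1) t) * indicator {0..} t \<partial>lborel)
       = ennreal (\<Sum>n\<le>k. \<Sum>j\<le>n. c n j * I1 a b n (j + 1))"
proof -
  have "ennreal (\<Sum>n\<le>k. \<Sum>j\<le>n. c n j * I1_integrand a b n (j + 1) t) * indicator {0..} t
      = (\<Sum>n\<le>k. \<Sum>j\<le>n. ennreal (c n j) * (ennreal (I1_integrand a b n (j + 1) t) * indicator {0..} t))"
    for t
    using c b by (cases "0 \<le> t")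
      (simp_all add: ennreal_mult[symmetric] I1_integrand_nonneg sum_nonneg)
  then have "(\<integral>\<^sup>+t. ennreal (\<Sum>n\<le>k. \<Sum>j\<le>n. c n j * I1_integrand a b n (j + 1) t) * indicator {0..} t \<partial>lborel)
      = (\<Sum>n\<le>k. \<Sum>j\<le>n. ennreal (c n j) * ennreal (I1 a b n (j + 1)))"
    using a b by (simp add: nn_integral_sum nn_integral_cmult nn_integral_I1)
  also have "\<dots> = ennreal (\<Sum>n\<le>k. \<Sum>j\<le>n. c n j * I1 a b n (j + 1))"
    using c b by (simp add: ennreal_mult[symmetric] I1_nonneg sum_nonneg)
  finally show ?thesis .
qed

text \<open>Rewriting one term of the closed form of nn_integral_exponential_erlang_tail, with
  \<alpha> = t/\<gamma>1 and \<beta> = t \<gamma>2/\<gamma>1, into the paper's coefficient times the I1-integrand.\<close>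
lemma kernel_term_identity:
  fixes \<gamma>1 \<gamma>2 t :: real
  assumes \<gamma>1: "0 < \<gamma>1" and \<gamma>2: "0 < \<gamma>2" and t: "0 \<le> t" and jn: "j \<le> n"
  shows "(t * \<gamma>2 / \<gamma>1) ^ j * (t / \<gamma>1) ^ (n - j) * exp (- (t / \<gamma>1))
           / (fact (n - j) * (1 + t * \<gamma>2 / \<gamma>1) ^ (j + 1)) / (1 + t)
       = \<gamma>1 powi (int j + 1 - int n) / (\<gamma>2 * fact (n - j)) * I1_integrand (1 / \<gamma>1) (\<gamma>1 / \<gamma>2) n (j + 1) t"
proof -
  have powi: "\<gamma>1 powi (int j + 1 - int n) = \<gamma>1 ^ (j + 1) / \<gamma>1 ^ n"
  proof -
    have "\<gamma>1 powi (int j + 1 - int n) = \<gamma>1 powi int (j + 1) / \<gamma>1 powi int n"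
      using \<gamma>1 by (subst power_int_diff[symmetric]) (auto simp: add.commute)
    then show ?thesis by (simp only: power_int_of_nat)
  qed
  have base: "1 + t * \<gamma>2 / \<gamma>1 = \<gamma>2 * (t + \<gamma>1 / \<gamma>2) / \<gamma>1"
    using \<gamma>1 \<gamma>2 by (simp add: field_simps)
  have split_t: "t ^ n = t ^ j * t ^ (n - j)" and split_g: "\<gamma>1 ^ n = \<gamma>1 ^ j * \<gamma>1 ^ (n - j)"
    using jn by (simp_all add: power_add[symmetric])
  have cancel: "(t * \<gamma>2 / \<gamma>1) ^ j * (t / \<gamma>1) ^ (n - j) * E / (fact (n - j) * (\<gamma>2 * u / \<gamma>1) ^ (j + 1)) / w
      = \<gamma>1 ^ (j + 1) / (\<gamma>1 ^ j * \<gamma>1 ^ (n - j)) / (\<gamma>2 * fact (n - j)) * (t ^ j * t ^ (n - j) * E / (u ^ (j + 1) * w))"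
    if "0 < u" "0 < w" for u w E :: real
    using that \<gamma>1 \<gamma>2 by (simp add: power_mult_distrib power_divide field_simps)
  have "t + \<gamma>1 / \<gamma>2 > 0" "1 + t > 0"
    using \<gamma>1 \<gamma>2 t by (auto intro: add_nonneg_pos)
  from cancel[OF this] show ?thesis
    unfolding powi base split_t split_g I1_integrand_def by (simp add: add.commute)
qed

lemma exponential_mixture_kernel:
  fixes \<gamma>1 \<gamma>2 t :: real
  assumes \<gamma>1: "0 < \<gamma>1" and \<gamma>2: "0 < \<gamma>2" and t: "0 \<le> t"
  shows "(\<integral>\<^sup>+y. ennreal (exponential_density 1 y * (erlang_tail k ((1 + \<gamma>2 * y) / \<gamma>1 * t) / (1 + t))) \<partial>lborel)
       = ennreal (\<Sum>n\<le>k. \<Sum>j\<le>n. \<gamma>1 powi (int j + 1 - int n) / (\<gamma>2 * fact (n - j))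
                              * I1_integrand (1 / \<gamma>1) (\<gamma>1 / \<gamma>2) n (j + 1) t)"
proof -
  define \<alpha> where "\<alpha> = t / \<gamma>1"
  define \<beta> where "\<beta> = t * \<gamma>2 / \<gamma>1"
  have \<alpha>\<beta>: "0 \<le> \<alpha>" "0 \<le> \<beta>"
    using \<gamma>1 \<gamma>2 t by (simp_all add: \<alpha>_def \<beta>_def)
  have affine: "(1 + \<gamma>2 * y) / \<gamma>1 * t = \<beta> * y + \<alpha>" for y
    using \<gamma>1 by (simp add: \<alpha>_def \<beta>_def field_simps)
  have "(\<integral>\<^sup>+y. ennreal (exponential_density 1 y * (erlang_tail k ((1 + \<gamma>2 * y) / \<gamma>1 * t) / (1 + t))) \<partial>lborel)
      = (\<integral>\<^sup>+y. ennreal (exponential_density 1 y * erlang_tail k (\<beta> * y + \<alpha>)) * ennreal (1 / (1 + t)) \<partial>lborel)"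
    using t unfolding affine by (intro nn_integral_cong) (simp add: ennreal_mult''[symmetric])
  also have "\<dots> = ennreal (\<Sum>n\<le>k. \<Sum>j\<le>n. \<beta> ^ j * \<alpha> ^ (n - j) * exp (- \<alpha>) / (fact (n - j) * (1 + \<beta>) ^ (j + 1)))
                    * ennreal (1 / (1 + t))"
    by (simp add: nn_integral_multc nn_integral_exponential_erlang_tail[OF \<alpha>\<beta>])
  also have "\<dots> = ennreal ((\<Sum>n\<le>k. \<Sum>j\<le>n. \<beta> ^ j * \<alpha> ^ (n - j) * exp (- \<alpha>)
                                   / (fact (n - j) * (1 + \<beta>) ^ (j + 1))) / (1 + t))"
    using t by (simp add: ennreal_mult''[symmetric])
  also have "(\<Sum>n\<le>k. \<Sum>j\<le>n. \<beta> ^ j * \<alpha> ^ (n - j) * exp (- \<alpha>) / (fact (n - j) * (1 + \<beta>) ^ (j + 1))) / (1 + t)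
      = (\<Sum>n\<le>k. \<Sum>j\<le>n. \<gamma>1 powi (int j + 1 - int n) / (\<gamma>2 * fact (n - j))
                       * I1_integrand (1 / \<gamma>1) (\<gamma>1 / \<gamma>2) n (j + 1) t)"
    unfolding sum_divide_distrib \<alpha>_def \<beta>_def
    using \<gamma>1 \<gamma>2 t by (intro sum.cong refl kernel_term_identity) auto
  finally show ?thesis .
qed


lemma nn_integral_ln_given_interference:
  fixes \<gamma>1 \<gamma>2 y :: real
  assumes \<gamma>1: "0 < \<gamma>1" and \<gamma>2: "0 < \<gamma>2"
  shows "(\<integral>\<^sup>+z. ennreal (erlang_density k 1 z) * ennreal (exponential_density 1 y)
                * ennreal (ln (1 + \<gamma>1 * z / (1 + \<gamma>2 * y))) \<partial>lborel)
       = (\<integral>\<^sup>+t. ennreal (exponential_density 1 y * (erlang_tail k ((1 + \<gamma>2 * y) / \<gamma>1 * t) / (1 + t)))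
                * indicator {0..} t \<partial>lborel)"
proof (cases "y < 0")
  case True
  then show ?thesis by (simp add: exponential_density_def)
next
  case False
  define s where "s = (1 + \<gamma>2 * y) / \<gamma>1"
  have s: "0 < s" using False \<gamma>1 \<gamma>2 by (simp add: s_def add_pos_nonneg)
  have density_nonneg: "0 \<le> exponential_density 1 y"
    using False by (simp add: exponential_density_def)
  have "(\<integral>\<^sup>+z. ennreal (erlang_density k 1 z) * ennreal (exponential_density 1 y)
                * ennreal (ln (1 + \<gamma>1 * z / (1 + \<gamma>2 * y))) \<partial>lborel)
      = ennreal (exponential_density 1 y)
          * (\<integral>\<^sup>+z. ennreal (erlang_density k 1 z) * ennreal (ln (1 + z / s)) \<partial>lborel)"
    by (subst nn_integral_cmult[symmetric]) (auto intro!: nn_integral_cong simp: s_def ac_simps)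
  also have "\<dots> = ennreal (exponential_density 1 y)
          * (\<integral>\<^sup>+t. ennreal (erlang_tail k (s * t) / (1 + t)) * indicator {0..} t \<partial>lborel)"
    by (simp only: nn_integral_erlang_ln[OF s])
  also have "\<dots> = (\<integral>\<^sup>+t. ennreal (exponential_density 1 y)
          * (ennreal (erlang_tail k (s * t) / (1 + t)) * indicator {0..} t) \<partial>lborel)"
    by (rule nn_integral_cmult[symmetric]) measurable
  also have "\<dots> = (\<integral>\<^sup>+t. ennreal (exponential_density 1 y * (erlang_tail k ((1 + \<gamma>2 * y) / \<gamma>1 * t) / (1 + t)))
                * indicator {0..} t \<partial>lborel)"
    unfolding ennreal_mult'[OF density_nonneg] by (simp add: s_def mult.assoc)
  finally show ?thesis .
qed

lemma nn_integral_ln_rate: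
  fixes \<gamma>1 \<gamma>2 :: real
  assumes \<gamma>1: "0 < \<gamma>1" and \<gamma>2: "0 < \<gamma>2"
  shows "(\<integral>\<^sup>+y. \<integral>\<^sup>+z. ennreal (erlang_density k 1 z) * ennreal (exponential_density 1 y)
                     * ennreal (ln (1 + \<gamma>1 * z / (1 + \<gamma>2 * y))) \<partial>lborel \<partial>lborel)
       = ennreal (\<Sum>n\<le>k. \<Sum>j\<le>n. \<gamma>1 powi (int j + 1 - int n) / (\<gamma>2 * fact (n - j))
                              * I1 (1 / \<gamma>1) (\<gamma>1 / \<gamma>2) n (j + 1))"
proof -
  define kernel where "kernel y t = ennreal (exponential_density 1 y
      * (erlang_tail k ((1 + \<gamma>2 * y) / \<gamma>1 * t) / (1 + t))) * indicator {0..} t" for y t :: real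
  have kernel_measurable: "(\<lambda>(y, t). kernel y t) \<in> borel_measurable (lborel \<Otimes>\<^sub>M lborel)"
    unfolding kernel_def by measurable
  have "(\<integral>\<^sup>+y. \<integral>\<^sup>+z. ennreal (erlang_density k 1 z) * ennreal (exponential_density 1 y)
                     * ennreal (ln (1 + \<gamma>1 * z / (1 + \<gamma>2 * y))) \<partial>lborel \<partial>lborel)
      = (\<integral>\<^sup>+t. \<integral>\<^sup>+y. kernel y t \<partial>lborel \<partial>lborel)"
    unfolding nn_integral_ln_given_interference[OF \<gamma>1 \<gamma>2] kernel_def[symmetric]
    by (rule lborel_pair.Fubini'[symmetric, OF kernel_measurable])
  also have "\<dots> = (\<integral>\<^sup>+t. ennreal (\<Sum>n\<le>k. \<Sum>j\<le>n. \<gamma>1 powi (int j + 1 - int n) / (\<gamma>2 * fact (n - j))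
                     * I1_integrand (1 / \<gamma>1) (\<gamma>1 / \<gamma>2) n (j + 1) t) * indicator {0..} t \<partial>lborel)"
  proof (intro nn_integral_cong)
    fix t :: real
    have "(\<integral>\<^sup>+y. kernel y t \<partial>lborel) = (\<integral>\<^sup>+y. ennreal (exponential_density 1 y
        * (erlang_tail k ((1 + \<gamma>2 * y) / \<gamma>1 * t) / (1 + t))) \<partial>lborel) * indicator {0..} t"
      unfolding kernel_def by (rule nn_integral_multc) measurable
    then show "(\<integral>\<^sup>+y. kernel y t \<partial>lborel) = ennreal (\<Sum>n\<le>k. \<Sum>j\<le>n. \<gamma>1 powi (int j + 1 - int n)
        / (\<gamma>2 * fact (n - j)) * I1_integrand (1 / \<gamma>1) (\<gamma>1 / \<gamma>2) n (j + 1) t) * indicator {0..} t"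
      using exponential_mixture_kernel[OF \<gamma>1 \<gamma>2, of t k] by (cases "0 \<le> t") simp_all
  qed
  also have "\<dots> = ennreal (\<Sum>n\<le>k. \<Sum>j\<le>n. \<gamma>1 powi (int j + 1 - int n) / (\<gamma>2 * fact (n - j))
                              * I1 (1 / \<gamma>1) (\<gamma>1 / \<gamma>2) n (j + 1))"
    using \<gamma>1 \<gamma>2 by (intro nn_integral_I1_sum) auto
  finally show ?thesis .
qed

section \<open>Independent pairs with densities\<close>

lemma (in prob_space) nn_integral_indep_densities:
  fixes Z Y :: "'a \<Rightarrow> real" and f g :: "real \<Rightarrow> ennreal" and h :: "real \<Rightarrow> real \<Rightarrow> ennreal"
  assumes Z: "distributed M lborel Z f" and Y: "distributed M lborel Y g"
    and indep: "indep_var borel Z borel Y"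
    and h: "(\<lambda>(z, y). h z y) \<in> borel_measurable (lborel \<Otimes>\<^sub>M lborel)"
  shows "(\<integral>\<^sup>+\<omega>. h (Z \<omega>) (Y \<omega>) \<partial>M) = (\<integral>\<^sup>+y. \<integral>\<^sup>+z. f z * g y * h z y \<partial>lborel \<partial>lborel)"
proof -
  have "indep_var lborel Z lborel Y"
    using indep unfolding indep_var_def indep_vars_def by (simp add: case_bool_if cong: if_cong)
  then have joint: "distributed M (lborel \<Otimes>\<^sub>M lborel) (\<lambda>\<omega>. (Z \<omega>, Y \<omega>)) (\<lambda>(z, y). f z * g y)"
    by (rule distributed_joint_indep[OF sigma_finite_lborel sigma_finite_lborel Z Y])
  have "(\<integral>\<^sup>+\<omega>. h (Z \<omega>) (Y \<omega>) \<partial>M) = (\<integral>\<^sup>+p. (\<lambda>(z, y). f z * g y * h z y) p \<partial>(lborel \<Otimes>\<^sub>M lborel))"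
    using distributed_nn_integral[OF joint h] by (simp add: split_beta')
  also have "\<dots> = (\<integral>\<^sup>+y. \<integral>\<^sup>+z. f z * g y * h z y \<partial>lborel \<partial>lborel)"
    using h distributed_borel_measurable[OF Z] distributed_borel_measurable[OF Y]
    by (subst lborel_pair.nn_integral_snd[symmetric]) (auto simp: split_beta')
  finally show ?thesis .
qed

theorem lemma3:
  fixes P :: "'s measure" and Z Y :: "'s \<Rightarrow> real"
    and \<gamma>1 \<gamma>2 :: real and M :: nat
  assumes "prob_space P"
    and "\<gamma>1 > 0" and "\<gamma>2 > 0" and "M \<ge> 1"
    and "distributed P lborel Z (erlang_density (M - 1) 1)"
    and "distributed P lborel Y (exponential_density 1)"
    and "prob_space.indep_var P borel Z borel Y"
  shows "prob_space.expectation P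
           (\<lambda>\<omega>. log 2 (1 + \<gamma>1 * Z \<omega> / (1 + \<gamma>2 * Y \<omega>)))
         = log 2 (exp 1) *
           (\<Sum>i<M. \<Sum>l\<le>i. \<gamma>1 powi (int l + 1 - int i) / (\<gamma>2 * fact (i - l))
              * I1 (1 / \<gamma>1) (\<gamma>1 / \<gamma>2) i (l + 1))"
proof -
  interpret prob_space P by fact
  note \<gamma>1 = \<open>\<gamma>1 > 0\<close> and \<gamma>2 = \<open>\<gamma>2 > 0\<close>
  note dZ = \<open>distributed P lborel Z (erlang_density (M - 1) 1)\<close>
  note dY = \<open>distributed P lborel Y (exponential_density 1)\<close>
  define rate where "rate = (\<Sum>i\<le>M - 1. \<Sum>l\<le>i. \<gamma>1 powi (int l + 1 - int i) / (\<gamma>2 * fact (i - l))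
                                  * I1 (1 / \<gamma>1) (\<gamma>1 / \<gamma>2) i (l + 1))"
  have rate_nonneg: "0 \<le> rate"
    unfolding rate_def using \<gamma>1 \<gamma>2 by (intro sum_nonneg mult_nonneg_nonneg I1_nonneg) auto
  have "(\<integral>\<^sup>+\<omega>. ennreal (ln (1 + \<gamma>1 * Z \<omega> / (1 + \<gamma>2 * Y \<omega>))) \<partial>P) = ennreal rate"
    unfolding rate_def using \<gamma>1 \<gamma>2
    by (subst nn_integral_indep_densities[OF dZ dY \<open>indep_var borel Z borel Y\<close>])
       (measurable, rule nn_integral_ln_rate)
  moreover have "AE \<omega> in P. 0 \<le> ln (1 + \<gamma>1 * Z \<omega> / (1 + \<gamma>2 * Y \<omega>))"
  proof -
    have "AE \<omega> in P. 0 \<le> Z \<omega>" "AE \<omega> in P. 0 \<le> Y \<omega>"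
      by (subst distributed_AE2[OF dZ] distributed_AE2[OF dY];
          auto intro!: AE_I2 simp: erlang_density_def)+
    then show ?thesis
      by eventually_elim (use \<gamma>1 \<gamma>2 in \<open>auto intro!: divide_nonneg_nonneg add_nonneg_nonneg\<close>)
  qed
  ultimately have "expectation (\<lambda>\<omega>. ln (1 + \<gamma>1 * Z \<omega> / (1 + \<gamma>2 * Y \<omega>))) = rate"
    using rate_nonneg distributed_measurable[OF dZ] distributed_measurable[OF dY]
    by (subst integral_eq_nn_integral) auto
  moreover have "{..<M} = {..M - 1}"
    using \<open>M \<ge> 1\<close> by auto
  ultimately show ?thesis
    by (simp add: log_def rate_def)
qed

end
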